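(* Let $\mathbf b\in\mathcal B$ and $u\in M$ with $u-\mathbf b\in\mathbb Z A_+$, and write $\mathbf b=\sum_{j=1}^mv_j\mathbf a_j$ with $v_j\in[0,1)$. Let $s_0\in\{0,1,\dots,\ell_0-1\}$ be the unique element with $u+s_0\mathbf a_0\equiv\mathbf b\pmod{\mathbb ZA}$ and let $s_1,\dots,s_m\in\mathbb Z$ be the unique integers with $u+s_0\mathbf a_0=\mathbf b-\sum_{j=1}^ms_j\mathbf a_j$. Then \[G^{(\mathbf b)}_u(\lambda)=\Big(\prod_{j=1}^m[-v_j]_{s_j}\prod_{j=1}^m\ell_j^{s_j}\Big)\frac{(-\ell_0)^{s_0}}{s_0!}F^{(\mathbf b)}_u(\lambda),\] where \[F^{(\mathbf b)}_u(\lambda)=\lambda^{s_0}\sum_{s=0}^\infty\frac{\prod_{j=1}^m\prod_{\sigma=0}^{\ell_j-1}\big(\frac{v_j-s_j+\sigma}{\ell_j}\big)_s}{\prod_{t=1}^{\ell_0}\big(\frac{s_0+t}{\ell_0}\big)_s}\lambda^{s\ell_0}.\]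
   Context: Let $A=\{\mathbf a_1,\dots,\mathbf a_m\}\subseteq\mathbb Z^n$ be linearly independent over $\mathbb R$, $\mathbf a_0\in\mathbb Z^n$, and $\ell_0,\ell_1,\dots,\ell_m$ positive integers with gcd $1$ such that $\ell_0\mathbf a_0=\sum_{j=1}^m\ell_j\mathbf a_j$ and $\ell_0=\sum_{j=1}^m\ell_j$. Put $A_+=A\cup\{\mathbf a_0\}$; $\mathbb ZA$ and $\mathbb ZA_+$ denote the subgroups of $\mathbb Z^n$ generated by $A$, $A_+$. Let $V$ be the real span of $A$, $V_{\mathbb Z}=V\cap\mathbb Z^n$, $C(A)$ the closed real cone generated by $A$, $M=V_{\mathbb Z}\cap C(A)$. Let $P(A)=\{\sum_jc_j\mathbf a_j:0\le c_j<1\}$ and $\mathcal B=V_{\mathbb Z}\cap P(A)$. Pochhammer symbol: $(a)_s=a(a+1)\cdots(a+s-1)$, $(a)_0=1$. For $z\in\mathbb C$, $l\in\mathbb Z$: $[z]_0=1$, $[z]_l=1/((z+1)\cdots(z+l))$ for $l>0$, $[z]_l=z(z-1)\cdots(z+l+1)$ for $l<0$. For $\mathbf b=\sum_jv_j\mathbf a_j\in\mathcal B$ ($v_j\in[0,1)$) and $u\in M$, let $g^{(\mathbf b)}_u=\prod_{j=1}^m[-v_j]_{s_j}\ell_j^{s_j}$ if $u=\sum_j(v_j-s_j)\mathbf a_j$ with all $s_j\in\mathbb Z_{\le0}$, and $g^{(\mathbf b)}_u=0$ otherwise; and $G^{(\mathbf b)}_u(\lambda)=\sum_{s\ge0}g^{(\mathbf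 b)}_{u+s\mathbf a_0}\frac{(-\ell_0\lambda)^s}{s!}\in\mathbb C[[\lambda]]$. *)

theory Defs
  imports "HOL-Analysis.Analysis" "HOL-Computational_Algebra.Formal_Power_Series"
begin

definition rvec :: "int ^ 'n \<Rightarrow> real ^ 'n" where
  "rvec x = (\<chi> i. of_int (x $ i))"

definition bracket :: "complex \<Rightarrow> int \<Rightarrow> complex" where
  "bracket z l =
     (if l \<ge> 0 then inverse (\<Prod>k=1..nat l. z + of_nat k)
      else (\<Prod>k<nat (-l). z - of_nat k))"

text \<open>The coefficient g^(b)_w, where b = sum_j v_j a_j (j = 1..m).
  The representation w = sum_j (v_j - t_j) a_j is unique by linear independence.\<close>
definition gcoef :: "(nat \<Rightarrow> int ^ 'n) \<Rightarrow> (nat \<Rightarrow> nat) \<Rightarrow> nat \<Rightarrow> (nat \<Rightarrow> real)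
                      \<Rightarrow> int ^ 'n \<Rightarrow> complex" where
  "gcoef a l m v w =
     (if \<exists>t::nat \<Rightarrow> int. (\<forall>j\<in>{1..m}. t j \<le> 0) \<and>
            rvec w = (\<Sum>j=1..m. (v j - of_int (t j)) *\<^sub>R rvec (a j))
      then (let t = (SOME t::nat \<Rightarrow> int. (\<forall>j\<in>{1..m}. t j \<le> 0) \<and>
            rvec w = (\<Sum>j=1..m. (v j - of_int (t j)) *\<^sub>R rvec (a j)))
            in (\<Prod>j=1..m. bracket (- complex_of_real (v j)) (t j) * (of_nat (l j)) powi (t j)))
      else 0)"

definition Gser :: "(nat \<Rightarrow> int ^ 'n) \<Rightarrow> (nat \<Rightarrow> nat) \<Rightarrow> nat \<Rightarrow> (nat \<Rightarrow> real)
                      \<Rightarrow> int ^ 'n \<Rightarrow> complex fps" where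
  "Gser a l m v u = Abs_fps (\<lambda>s. gcoef a l m v (u + int s *s a 0)
                                   * (- of_nat (l 0)) ^ s / fact s)"

definition Fcoef :: "(nat \<Rightarrow> nat) \<Rightarrow> nat \<Rightarrow> (nat \<Rightarrow> real) \<Rightarrow> nat \<Rightarrow> (nat \<Rightarrow> int) \<Rightarrow> nat \<Rightarrow> complex" where
  "Fcoef l m v s0 s k =
     (\<Prod>j=1..m. \<Prod>\<sigma><l j. pochhammer ((complex_of_real (v j) - of_int (s j) + of_nat \<sigma>) / of_nat (l j)) k)
     / (\<Prod>t=1..l 0. pochhammer ((of_nat s0 + of_nat t) / of_nat (l 0)) k)"

definition Fser :: "(nat \<Rightarrow> nat) \<Rightarrow> nat \<Rightarrow> (nat \<Rightarrow> real) \<Rightarrow> nat \<Rightarrow> (nat \<Rightarrow> int) \<Rightarrow> complex fps" where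
  "Fser l m v s0 s = fps_X ^ s0 *
     Abs_fps (\<lambda>k. if l 0 dvd k then Fcoef l m v s0 s (k div l 0) else 0)"

end

theory Submission
  imports Defs
begin

(* Since l_0 a_0 = sum_j l_j a_j, the coordinates of u + k a_0 in the basis A are
   v_j - s_j + (k - s_0) l_j / l_0.  Hence g_{u + k a_0} can only be nonzero if l_0 divides
   (k - s_0) l_j for every j, which by gcd(l_0, ..., l_m) = 1 and 0 <= s_0 < l_0 means
   k = s_0 + r l_0 with r >= 0; the exponents s_j - r l_j are then <= 0 because u in C(A)
   forces s_j <= 0.  On this progression Gauss' multiplication formula
   (x)_{l r} = l^{l r} prod_{sigma < l} ((x + sigma) / l)_r splits both [-v_j]_{s_j - r l_j}
   and (s_0 + r l_0)!; the powers l_j^{r l_j} and l_0^{r l_0} this produces cancel against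
   l_j^{s_j - r l_j} and (-l_0)^{s_0 + r l_0}, and the signs (-1)^{r l_j} multiply to
   (-1)^{r l_0} because sum_j l_j = l_0. *)

lemma rvec_add: "rvec (x + y) = rvec x + rvec y"
  by (simp add: rvec_def vec_eq_iff)

lemma rvec_diff: "rvec (x - y) = rvec x - rvec y"
  by (simp add: rvec_def vec_eq_iff)

lemma rvec_sum: "rvec (sum f S) = (\<Sum>i\<in>S. rvec (f i))"
  by (simp add: rvec_def vec_eq_iff)

lemma rvec_scaleR: "rvec (c *s x) = of_int c *\<^sub>R rvec x"
  by (simp add: rvec_def vec_eq_iff)

lemma independent_coeffs_unique:
  fixes A :: "'i \<Rightarrow> 'v::real_vector"
  assumes "finite S" "inj_on A S" "independent (A ` S)"
    and "(\<Sum>i\<in>S. c i *\<^sub>R A i) = (\<Sum>i\<in>S. d i *\<^sub>R A i)" and "j \<in> S"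
  shows "c j = d j"
proof -
  define g where "g x = c (inv_into S A x) - d (inv_into S A x)" for x
  have "(\<Sum>x\<in>A ` S. g x *\<^sub>R x) = (\<Sum>i\<in>S. (c i - d i) *\<^sub>R A i)"
    using assms(2) by (simp add: sum.reindex g_def cong: sum.cong)
  also have "\<dots> = 0" using assms(4) by (simp add: scaleR_diff_left sum_subtractf)
  finally have "g (A j) = 0"
    using independentD[OF assms(3)] assms(1,5) by blast
  then show ?thesis using assms(2,5) by (simp add: g_def)
qed

lemma dvd_if_dvd_mult_all_Gcd_eq_1:
  fixes f :: "'i \<Rightarrow> 'a::semiring_Gcd"
  assumes "\<And>j. j \<in> J \<Longrightarrow> n dvd d * f j" and "Gcd (f ` J) = 1"
  shows "n dvd d"
proof -
  have "n dvd Gcd ((*) d ` f ` J)" using assms(1) by (auto intro!: Gcd_greatest)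
  also have "\<dots> = normalize d" by (simp add: Gcd_mult assms(2))
  finally show ?thesis by simp
qed

lemma bracket_uminus_nonpos:
  "s \<le> 0 \<Longrightarrow> bracket (-w) s = (-1) ^ nat (-s) * pochhammer w (nat (-s))"
proof -
  assume "s \<le> 0"
  have "(\<Prod>k<nat (-s). -w - of_nat k) = (\<Prod>k<nat (-s). -1 * (w + of_nat k))"
    by (intro prod.cong) auto
  also have "\<dots> = (-1) ^ nat (-s) * pochhammer w (nat (-s))"
    by (simp only: prod.distrib prod_constant card_lessThan) (simp add: pochhammer_prod atLeast0LessThan)
  finally show ?thesis using \<open>s \<le> 0\<close> by (cases "s = 0") (auto simp: bracket_def)
qed

lemma bracket_diff_nat:
  assumes "s \<le> 0"
  shows "bracket (-w) (s - int n) = bracket (-w) s * (-1) ^ n * pochhammer (w - of_int s) n"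
proof -
  have "nat (-(s - int n)) = nat (-s) + n" using assms by simp
  moreover have "w + of_nat (nat (-s)) = w - of_int s" using assms by simp
  ultimately show ?thesis using assms
    by (simp add: bracket_uminus_nonpos pochhammer_product' power_add)
qed

lemma pochhammer_mult_eq_prod:
  fixes z :: "'a::field_char_0"
  assumes "l > 0"
  shows "pochhammer z (l * r) =
           of_nat l ^ (l * r) * (\<Prod>\<sigma><l. pochhammer ((z + of_nat \<sigma>) / of_nat l) r)"
proof (induction r)
  case 0
  then show ?case by simp
next
  case (Suc r)
  have "(\<Prod>\<sigma><l. (z + of_nat \<sigma>) / of_nat l + of_nat r) =
        (\<Prod>\<sigma><l. (z + of_nat (l * r) + of_nat \<sigma>)) / of_nat l ^ l"
    using assms by (simp add: prod_dividef field_simps)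
  also have "\<dots> = pochhammer (z + of_nat (l * r)) l / of_nat l ^ l"
    by (simp add: pochhammer_prod atLeast0LessThan)
  finally have last_block: "pochhammer (z + of_nat (l * r)) l =
      of_nat l ^ l * (\<Prod>\<sigma><l. (z + of_nat \<sigma>) / of_nat l + of_nat r)"
    using assms by simp
  have "pochhammer z (l * Suc r) = pochhammer z (l * r) * pochhammer (z + of_nat (l * r)) l"
    using pochhammer_product'[of z "l * r" l] by (simp add: add.commute)
  also have "\<dots> = of_nat l ^ (l * Suc r) * (\<Prod>\<sigma><l. pochhammer ((z + of_nat \<sigma>) / of_nat l) (Suc r))"
    unfolding Suc.IH last_block by (simp add: pochhammer_Suc prod.distrib power_add mult_ac)
  finally show ?case .
qed

lemma fact_add_mult_eq_prod:
  assumes "l > 0"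
  shows "(fact (s0 + l * r) :: 'a::field_char_0) =
           fact s0 * of_nat l ^ (l * r) * (\<Prod>t=1..l. pochhammer ((of_nat s0 + of_nat t) / of_nat l) r)"
proof -
  have "(fact (s0 + l * r) :: 'a) = fact s0 * pochhammer (of_nat s0 + 1) (l * r)"
    by (simp add: pochhammer_fact pochhammer_product' add.commute)
  also have "pochhammer (of_nat s0 + 1 :: 'a) (l * r) =
      of_nat l ^ (l * r) * (\<Prod>t<l. pochhammer ((of_nat s0 + of_nat (Suc t)) / of_nat l) r)"
    by (simp add: pochhammer_mult_eq_prod[OF assms] add_ac)
  also have "(\<Prod>t<l. pochhammer ((of_nat s0 + of_nat (Suc t)) / of_nat l) r) =
      (\<Prod>t=1..l. pochhammer ((of_nat s0 + of_nat t) / of_nat l) (r :: nat) :: 'a)"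
    by (simp only: One_nat_def prod.atLeast1_atMost_eq)
  finally show ?thesis by (simp add: mult_ac)
qed

lemma bracket_powi_diff_mult:
  fixes w :: complex
  assumes "s \<le> 0" and "l > 0"
  shows "bracket (-w) (s - int (r * l)) * of_nat l powi (s - int (r * l)) =
           bracket (-w) s * of_nat l powi s * (-1) ^ (r * l) *
           (\<Prod>\<sigma><l. pochhammer ((w - of_int s + of_nat \<sigma>) / of_nat l) r)"
proof -
  have powi: "(of_nat l :: complex) powi (s - int (r * l)) = of_nat l powi s / of_nat l ^ (r * l)"
    using assms(2) by (simp add: power_int_diff power_int_of_nat del: of_nat_mult)
  have "bracket (-w) (s - int (r * l)) * of_nat l powi (s - int (r * l)) =
      bracket (-w) s * (-1) ^ (r * l) * pochhammer (w - of_int s) (r * l) * (of_nat l powi s / of_nat l ^ (r * l))"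
    by (simp only: bracket_diff_nat[OF assms(1)] powi)
  also have "pochhammer (w - of_int s) (r * l) =
      of_nat l ^ (r * l) * (\<Prod>\<sigma><l. pochhammer ((w - of_int s + of_nat \<sigma>) / of_nat l) r)"
    using pochhammer_mult_eq_prod[OF assms(2)] by (metis mult.commute)
  finally show ?thesis
    using assms(2) by (simp add: field_simps)
qed

locale circuit =
  fixes a :: "nat \<Rightarrow> int ^ 'n" and l :: "nat \<Rightarrow> nat" and m :: nat
  assumes inj: "inj_on (\<lambda>j. rvec (a j)) {1..m}"
    and indep: "independent ((\<lambda>j. rvec (a j)) ` {1..m})"
    and l_pos: "\<forall>j\<in>{0..m}. l j > 0"
    and l_gcd: "Gcd (l ` {0..m}) = 1"
    and rel: "int (l 0) *s a 0 = (\<Sum>j=1..m. int (l j) *s a j)"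
    and l0_sum: "l 0 = (\<Sum>j=1..m. l j)"
begin

lemma l0_pos: "l 0 > 0"
  using l_pos by simp

lemma coeffs_unique:
  assumes "(\<Sum>i=1..m. c i *\<^sub>R rvec (a i)) = (\<Sum>i=1..m. d i *\<^sub>R rvec (a i))" and "j \<in> {1..m}"
  shows "c j = d j"
  using independent_coeffs_unique[OF _ inj indep] assms by simp

lemma rvec_a0: "rvec (a 0) = (\<Sum>j=1..m. (real (l j) / real (l 0)) *\<^sub>R rvec (a j))"
proof -
  have "rvec (a 0) = inverse (real (l 0)) *\<^sub>R (real (l 0) *\<^sub>R rvec (a 0))"
    using l0_pos by simp
  also have "real (l 0) *\<^sub>R rvec (a 0) = (\<Sum>j=1..m. real (l j) *\<^sub>R rvec (a j))"
    using arg_cong[OF rel, of rvec] by (simp add: rvec_scaleR rvec_sum)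
  finally show ?thesis
    by (simp add: scaleR_sum_right divide_inverse_commute)
qed

lemma l0_dvd_if_dvd_mult:
  assumes "\<And>j. j \<in> {1..m} \<Longrightarrow> int (l 0) dvd d * int (l j)"
  shows "int (l 0) dvd d"
proof (rule dvd_if_dvd_mult_all_Gcd_eq_1)
  show "int (l 0) dvd d * int (l j)" if "j \<in> {0..m}" for j
    using assms that by (cases "j = 0") auto
  show "Gcd ((\<lambda>j. int (l j)) ` {0..m}) = 1"
    by (metis Gcd_int_eq image_image l_gcd of_nat_1)
qed

lemma gcoef_eq_prod:
  assumes "\<forall>j\<in>{1..m}. t j \<le> 0"
    and w_coords: "rvec w = (\<Sum>j=1..m. (v j - of_int (t j)) *\<^sub>R rvec (a j))"
  shows "gcoef a l m v w =
           (\<Prod>j=1..m. bracket (- complex_of_real (v j)) (t j) * of_nat (l j) powi t j)"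
proof -
  define P where "P t' \<longleftrightarrow> (\<forall>j\<in>{1..m}. t' j \<le> 0) \<and>
      rvec w = (\<Sum>j=1..m. (v j - of_int (t' j)) *\<^sub>R rvec (a j))" for t' :: "nat \<Rightarrow> int"
  have "P t"
    using assms by (simp add: P_def)
  then have "P (SOME t'. P t')"
    by (rule someI[where P = P])
  then have some_eq: "(SOME t'. P t') j = t j" if "j \<in> {1..m}" for j
    using coeffs_unique[of "\<lambda>j. v j - of_int ((SOME t'. P t') j)" "\<lambda>j. v j - of_int (t j)"]
      w_coords that
    unfolding P_def by auto
  have "gcoef a l m v w = (if \<exists>t'. P t' then (let t' = SOME t'. P t' in
      \<Prod>j=1..m. bracket (- complex_of_real (v j)) (t' j) * of_nat (l j) powi t' j) else 0)"
    unfolding gcoef_def P_def by (rule refl)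
  also have "\<dots> = (\<Prod>j=1..m. bracket (- complex_of_real (v j)) ((SOME t'. P t') j)
      * of_nat (l j) powi (SOME t'. P t') j)"
    by (simp only: if_P[OF exI[of P t, OF \<open>P t\<close>]] Let_def)
  also have "\<dots> = (\<Prod>j=1..m. bracket (- complex_of_real (v j)) (t j) * of_nat (l j) powi t j)"
    by (rule prod.cong) (simp_all add: some_eq)
  finally show ?thesis .
qed

end

locale circuit_coset = circuit +
  fixes b u :: "int ^ 'n" and v :: "nat \<Rightarrow> real" and s0 :: nat and s :: "nat \<Rightarrow> int"
  assumes v_lt_1: "\<forall>j\<in>{1..m}. v j < 1"
    and b_rep: "rvec b = (\<Sum>j=1..m. v j *\<^sub>R rvec (a j))"
    and u_M: "\<exists>c::nat \<Rightarrow> real. (\<forall>j\<in>{1..m}. 0 \<le> c j) \<and> rvec u = (\<Sum>j=1..m. c j *\<^sub>R rvec (a j))"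
    and s0_lt: "s0 < l 0"
    and s_rep: "u + int s0 *s a 0 = b - (\<Sum>j=1..m. s j *s a j)"
begin

lemma rvec_u_add_a0:
  "rvec (u + int k *s a 0) =
     (\<Sum>j=1..m. (v j - of_int (s j) + (real k - real s0) * real (l j) / real (l 0)) *\<^sub>R rvec (a j))"
proof -
  have "u + int k *s a 0 = (u + int s0 *s a 0) + (int k - int s0) *s a 0"
    by (simp add: vec_eq_iff algebra_simps)
  then have "rvec (u + int k *s a 0) = rvec (u + int s0 *s a 0) + (real k - real s0) *\<^sub>R rvec (a 0)"
    by (simp only: rvec_add rvec_scaleR) simp
  also have "rvec (u + int s0 *s a 0) = rvec b - (\<Sum>j=1..m. of_int (s j) *\<^sub>R rvec (a j))"
    unfolding s_rep by (simp add: rvec_diff rvec_sum rvec_scaleR)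
  also have "rvec b - (\<Sum>j=1..m. of_int (s j) *\<^sub>R rvec (a j)) + (real k - real s0) *\<^sub>R rvec (a 0) =
      (\<Sum>j=1..m. (v j - of_int (s j) + (real k - real s0) * real (l j) / real (l 0)) *\<^sub>R rvec (a j))"
    unfolding b_rep rvec_a0
    by (simp add: scaleR_sum_right sum_subtractf[symmetric] sum.distrib[symmetric] algebra_simps)
  finally show ?thesis .
qed

lemma s_nonpos:
  assumes "j \<in> {1..m}"
  shows "s j \<le> 0"
proof -
  obtain c where c_nonneg: "\<forall>j\<in>{1..m}. 0 \<le> c j"
    and u_coords: "rvec u = (\<Sum>j=1..m. c j *\<^sub>R rvec (a j))"
    using u_M by blast
  have "rvec u = (\<Sum>j=1..m. (v j - of_int (s j) - real s0 * real (l j) / real (l 0)) *\<^sub>R rvec (a j))"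
    using rvec_u_add_a0[of 0] by (simp add: vec_eq_iff)
  from coeffs_unique[OF trans[OF u_coords[symmetric] this] assms]
  have "c j = v j - of_int (s j) - real s0 * real (l j) / real (l 0)" .
  moreover have "0 \<le> c j" and "v j < 1"
    using c_nonneg v_lt_1 assms by auto
  moreover have "real s0 * real (l j) / real (l 0) \<ge> 0"
    by simp
  ultimately have "real_of_int (s j) < 1"
    by linarith
  then show ?thesis
    by simp
qed

lemma gcoef_on_progression:
  "gcoef a l m v (u + int (s0 + l 0 * r) *s a 0) =
     (\<Prod>j=1..m. bracket (- complex_of_real (v j)) (s j - int (r * l j))
                * of_nat (l j) powi (s j - int (r * l j)))"
proof (rule gcoef_eq_prod)
  show "\<forall>j\<in>{1..m}. s j - int (r * l j) \<le> 0"
  proof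
    fix j
    assume "j \<in> {1..m}"
    then show "s j - int (r * l j) \<le> 0"
      using s_nonpos[of j] by linarith
  qed
  show "rvec (u + int (s0 + l 0 * r) *s a 0) =
      (\<Sum>j=1..m. (v j - of_int (s j - int (r * l j))) *\<^sub>R rvec (a j))"
    unfolding rvec_u_add_a0 using l0_pos by (intro sum.cong) (auto simp: field_simps)
qed

lemma gcoef_on_progression_factored:
  "gcoef a l m v (u + int (s0 + l 0 * r) *s a 0) =
     (\<Prod>j=1..m. bracket (- complex_of_real (v j)) (s j)) * (\<Prod>j=1..m. of_nat (l j) powi s j)
     * (-1) ^ (r * l 0)
     * (\<Prod>j=1..m. \<Prod>\<sigma><l j. pochhammer ((complex_of_real (v j) - of_int (s j) + of_nat \<sigma>) / of_nat (l j)) r)"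
proof -
  have "gcoef a l m v (u + int (s0 + l 0 * r) *s a 0) =
      (\<Prod>j=1..m. bracket (- complex_of_real (v j)) (s j) * of_nat (l j) powi s j * (-1) ^ (r * l j)
         * (\<Prod>\<sigma><l j. pochhammer ((complex_of_real (v j) - of_int (s j) + of_nat \<sigma>) / of_nat (l j)) r))"
    unfolding gcoef_on_progression
  proof (rule prod.cong[OF refl])
    fix j
    assume "j \<in> {1..m}"
    then show "bracket (- complex_of_real (v j)) (s j - int (r * l j)) * of_nat (l j) powi (s j - int (r * l j)) =
        bracket (- complex_of_real (v j)) (s j) * of_nat (l j) powi s j * (-1) ^ (r * l j)
         * (\<Prod>\<sigma><l j. pochhammer ((complex_of_real (v j) - of_int (s j) + of_nat \<sigma>) / of_nat (l j)) r)"
      using s_nonpos l_pos by (intro bracket_powi_diff_mult) auto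
  qed
  also have "\<dots> = (\<Prod>j=1..m. bracket (- complex_of_real (v j)) (s j)) * (\<Prod>j=1..m. of_nat (l j) powi s j)
      * (\<Prod>j=1..m. (-1) ^ (r * l j))
      * (\<Prod>j=1..m. \<Prod>\<sigma><l j. pochhammer ((complex_of_real (v j) - of_int (s j) + of_nat \<sigma>) / of_nat (l j)) r)"
    by (simp only: prod.distrib)
  also have "(\<Prod>j=1..m. (-1) ^ (r * l j)) = ((-1) ^ (r * l 0) :: complex)"
    by (simp only: l0_sum sum_distrib_left power_sum)
  finally show ?thesis .
qed

lemma gcoef_off_progression_eq_0:
  assumes "\<not> (s0 \<le> k \<and> l 0 dvd k - s0)"
  shows "gcoef a l m v (u + int k *s a 0) = 0"
proof -
  have "\<nexists>t. rvec (u + int k *s a 0) = (\<Sum>j=1..m. (v j - of_int (t j)) *\<^sub>R rvec (a j))"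
  proof
    assume "\<exists>t. rvec (u + int k *s a 0) = (\<Sum>j=1..m. (v j - of_int (t j)) *\<^sub>R rvec (a j))"
    then obtain t where t: "rvec (u + int k *s a 0) = (\<Sum>j=1..m. (v j - of_int (t j)) *\<^sub>R rvec (a j))"
      by blast
    have "int (l 0) dvd (int k - int s0) * int (l j)" if "j \<in> {1..m}" for j
    proof -
      have "v j - of_int (s j) + (real k - real s0) * real (l j) / real (l 0) = v j - of_int (t j)"
        using coeffs_unique[OF trans[OF rvec_u_add_a0[symmetric] t] that] .
      then have "real_of_int ((int k - int s0) * int (l j)) = real_of_int (int (l 0) * (s j - t j))"
        using l0_pos by (simp add: field_simps)
      then have "(int k - int s0) * int (l j) = int (l 0) * (s j - t j)"
        by (simp only: of_int_eq_iff)
      then show ?thesis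
        by (rule dvdI)
    qed
    then have l0_dvd_diff: "int (l 0) dvd int k - int s0"
      by (rule l0_dvd_if_dvd_mult)
    have "s0 \<le> k"
    proof (rule ccontr)
      assume "\<not> s0 \<le> k"
      then have "0 < int s0 - int k" and "int s0 - int k < int (l 0)"
        using s0_lt by auto
      moreover have "int (l 0) dvd int s0 - int k"
        using l0_dvd_diff by (simp add: dvd_diff_commute)
      ultimately show False
        by (simp add: zdvd_not_zless)
    qed
    moreover have "l 0 dvd k - s0"
      using l0_dvd_diff \<open>s0 \<le> k\<close> by (metis int_dvd_int_iff of_nat_diff)
    ultimately show False
      using assms by blast
  qed
  then have "\<not> (\<exists>t. (\<forall>j\<in>{1..m}. t j \<le> 0) \<and>
      rvec (u + int k *s a 0) = (\<Sum>j=1..m. (v j - of_int (t j)) *\<^sub>R rvec (a j)))"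
    by blast
  then show ?thesis
    unfolding gcoef_def by (rule if_not_P)
qed

lemma Gser_nth_on_progression:
  "fps_nth (Gser a l m v u) (s0 + l 0 * r) =
     (\<Prod>j=1..m. bracket (- complex_of_real (v j)) (s j)) * (\<Prod>j=1..m. of_nat (l j) powi s j)
     * (- of_nat (l 0)) ^ s0 / fact s0 * Fcoef l m v s0 s r"
proof -
  define B where "B = (\<Prod>j=1..m. bracket (- complex_of_real (v j)) (s j))
      * (\<Prod>j=1..m. of_nat (l j) powi s j)"
  define P where "P = (\<Prod>j=1..m. \<Prod>\<sigma><l j.
      pochhammer ((complex_of_real (v j) - of_int (s j) + of_nat \<sigma>) / of_nat (l j)) r)"
  define Q where "Q = (\<Prod>t=1..l 0. pochhammer ((of_nat s0 + of_nat t) / of_nat (l 0)) r :: complex)"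
  have gcoef: "gcoef a l m v (u + int (s0 + l 0 * r) *s a 0) = B * (-1) ^ (r * l 0) * P"
    unfolding gcoef_on_progression_factored B_def P_def ..
  have fact: "fact (s0 + l 0 * r) = fact s0 * of_nat (l 0) ^ (l 0 * r) * Q"
    unfolding Q_def by (rule fact_add_mult_eq_prod[OF l0_pos])
  then have "Q \<noteq> 0"
    by (metis fact_nonzero mult_zero_right)
  have power: "(- of_nat (l 0) :: complex) ^ (s0 + l 0 * r) =
      (- of_nat (l 0)) ^ s0 * ((-1) ^ (l 0 * r) * of_nat (l 0) ^ (l 0 * r))"
    by (simp only: power_add power_minus[of "of_nat (l 0)"])
  have sign: "(-1 :: complex) ^ (r * l 0) * (-1) ^ (l 0 * r) = 1"
    by (simp add: mult.commute[of r] flip: power_mult_distrib)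
  have "fps_nth (Gser a l m v u) (s0 + l 0 * r) =
      B * (-1) ^ (r * l 0) * P * ((- of_nat (l 0)) ^ s0 * ((-1) ^ (l 0 * r) * of_nat (l 0) ^ (l 0 * r)))
      / (fact s0 * of_nat (l 0) ^ (l 0 * r) * Q)"
    by (simp only: Gser_def fps_nth_Abs_fps gcoef power fact)
  also have "\<dots> = B * (- of_nat (l 0)) ^ s0 / fact s0 * (P / Q)"
    using sign \<open>Q \<noteq> 0\<close> l0_pos by (simp add: field_simps)
  also have "P / Q = Fcoef l m v s0 s r"
    by (simp add: Fcoef_def P_def Q_def)
  finally show ?thesis
    by (simp only: B_def)
qed

theorem Gser_eq_Fser:
  "Gser a l m v u =
     fps_const ((\<Prod>j=1..m. bracket (- complex_of_real (v j)) (s j))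
                * (\<Prod>j=1..m. (of_nat (l j)) powi (s j))
                * (- of_nat (l 0)) ^ s0 / fact s0)
     * Fser l m v s0 s"
proof (rule fps_ext, goal_cases)
  case (1 k)
  consider (progression) r where "k = s0 + l 0 * r" | (off) "\<not> (s0 \<le> k \<and> l 0 dvd k - s0)"
    by (metis dvd_def le_add_diff_inverse)
  then show ?case
  proof cases
    case progression
    then show ?thesis
      using l0_pos by (simp add: Gser_nth_on_progression Fser_def fps_X_power_mult_nth)
  next
    case off
    then show ?thesis
      by (auto simp: Gser_def Fser_def fps_X_power_mult_nth gcoef_off_progression_eq_0)
  qed
qed

end

theorem theorem4p7:
  fixes a :: "nat \<Rightarrow> int ^ 'n" and l :: "nat \<Rightarrow> nat" and m :: nat
    and b u :: "int ^ 'n" and v :: "nat \<Rightarrow> real" and s0 :: nat and s :: "nat \<Rightarrow> int"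
  assumes indep: "inj_on (\<lambda>j. rvec (a j)) {1..m}" "independent ((\<lambda>j. rvec (a j)) ` {1..m})"
    and l_pos: "\<forall>j\<in>{0..m}. l j > 0"
    and l_gcd: "Gcd (l ` {0..m}) = 1"
    and rel: "int (l 0) *s a 0 = (\<Sum>j=1..m. int (l j) *s a j)"
    and l0_sum: "l 0 = (\<Sum>j=1..m. l j)"
    and v_range: "\<forall>j\<in>{1..m}. 0 \<le> v j \<and> v j < 1"
    and b_rep: "rvec b = (\<Sum>j=1..m. v j *\<^sub>R rvec (a j))"
    and u_M: "\<exists>c::nat \<Rightarrow> real. (\<forall>j\<in>{1..m}. 0 \<le> c j) \<and> rvec u = (\<Sum>j=1..m. c j *\<^sub>R rvec (a j))"
    and u_lat: "\<exists>k::nat \<Rightarrow> int. u - b = (\<Sum>j=0..m. k j *s a j)"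
    and s0_lt: "s0 < l 0"
    and s_rep: "u + int s0 *s a 0 = b - (\<Sum>j=1..m. s j *s a j)"
  shows "Gser a l m v u =
           fps_const ((\<Prod>j=1..m. bracket (- complex_of_real (v j)) (s j))
                      * (\<Prod>j=1..m. (of_nat (l j)) powi (s j))
                      * (- of_nat (l 0)) ^ s0 / fact s0)
           * Fser l m v s0 s"
proof -
  \<comment> \<open>\<open>u_lat\<close> is implied by \<open>s_rep\<close>, and of \<open>v_range\<close> only \<open>v j < 1\<close> is used.\<close>
  interpret circuit_coset a l m b u v s0 s
    by unfold_locales (use indep l_pos l_gcd rel l0_sum v_range b_rep u_M s0_lt s_rep in auto)
  show ?thesis
    by (rule Gser_eq_Fser)
qed

end
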